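(* Assume source and target traces are related via ${\sim}=\langle \overset{\circ}{\sim},\overset{\bullet}{\sim}\rangle$, i.e. $s\sim t\iff s^\circ\overset{\circ}{\sim}t^\circ \wedge s^\bullet\overset{\bullet}{\sim}t^\bullet$, where $\overset{\bullet}{\sim}$ is a total and surjective map from source output projections to target output projections. Let $\phi_T\in\mathit{uco}(2^{\mathit{Trace}_T^\circ})$ and $\rho_T\in\mathit{uco}(2^{\mathit{Trace}_T^\bullet})$, and assume that for all $s,t$, $s^\circ\overset{\circ}{\sim}t^\circ$ implies $\phi_T(t^\circ)=\phi_T(\tilde\tau^\circ(s^\circ))$. If the compilation chain satisfies $\mathit{CC}^{\sim}$ and a source program $W$ satisfies $\mathit{ANI}[\phi_S^\#,\rho_S^\#]$, then $W{\downarrow}$ satisfies $\mathit{ANI}[\phi_T,\rho_T]$, where $\phi_S^\#=\tilde\sigma^\circ\circ\phi_T\circ\tilde\tau^\circ$ and $\rho_S^\#=\tilde\sigma^\bullet\circ\rho_T\circ\tilde\tau^\bullet$.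
   Context: A compilation chain consists of source (whole) programs $W$, target programs, sets $\mathit{Trace}_S,\mathit{Trace}_T$ of source and target traces, semantics relations $W\rightsquigarrow t$ at both levels, and a compiler $W\mapsto W{\downarrow}$; $\mathit{beh}(W)=\{t\mid W\rightsquigarrow t\}$, and $W$ satisfies a hyperproperty $H$ iff $\mathit{beh}(W)\in H$. $\mathit{CC}^{\sim}$ states: for every $W$ and $t$, if $W{\downarrow}\rightsquigarrow t$ then there is $s\sim t$ with $W\rightsquigarrow s$. Each trace $t$ has a disjoint input projection $t^\circ$ and output projection $t^\bullet$; $\mathit{Trace}^\circ,\mathit{Trace}^\bullet$ are the sets of input and output projections. "Total and surjective map from source to target" means each source output projection is related to exactly one target output projection and every target output projection is related to some source one. $\tilde\tau^\circ,\tilde\sigma^\circ$ are the existential and universal images of $\overset{\circ}{\sim}$: $\tilde\tau^\circ(\pi)=\{t^\circ\mid\exists s^\circ\in\pi.\ s^\circ\overset{\circ}{\sim}t^\circ\}$, $\tilde\sigma^\circ(\pi)=\{s^\circ\mid\forall t^\circ.\ s^\circ\overset{\circ}{\sim}t^\circ\Rightarrow t^\circ\in\pi\}$; $\tilde\tau^\bullet,\tilde\sigma^\bullet$ are defined analogously from $\overset{\bullet}{\sim}$. A single element $x$ as argument abbreviates $\{x\}$. An upper closure operator ($\mathit{uco}$) on a powerset is a monotone, idempotent, extensive map. $\mathit{ANI}[\phi,\rho]=\{\pi\mid\forall t_1,t_2\in\pi.\ \phi(t_1^\circ)=\phi(t_2^\circ)\Rightarrow\rho(t_1^\bullet)=\rho(t_2^\bullet)\}$.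 *)

theory Defs
  imports Main
begin

text \<open>Traces are elements of types; the trace sets Trace_S, Trace_T are the whole types.
  Input/output projections are functions; Trace^in and Trace^out are their ranges.\<close>

definition beh :: "('w \<Rightarrow> 't \<Rightarrow> bool) \<Rightarrow> 'w \<Rightarrow> 't set" where
  "beh sem W = {t. sem W t}"

definition sat :: "('w \<Rightarrow> 't \<Rightarrow> bool) \<Rightarrow> 'w \<Rightarrow> 't set set \<Rightarrow> bool" where
  "sat sem W H \<longleftrightarrow> beh sem W \<in> H"

definition CC :: "('w \<Rightarrow> 's \<Rightarrow> bool) \<Rightarrow> ('p \<Rightarrow> 't \<Rightarrow> bool) \<Rightarrow> ('w \<Rightarrow> 'p)
                  \<Rightarrow> ('s \<Rightarrow> 't \<Rightarrow> bool) \<Rightarrow> bool" where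
  "CC semS semT cmp rel \<longleftrightarrow>
     (\<forall>W t. semT (cmp W) t \<longrightarrow> (\<exists>s. rel s t \<and> semS W s))"

definition pair_rel :: "('s \<Rightarrow> 'si) \<Rightarrow> ('s \<Rightarrow> 'so) \<Rightarrow> ('t \<Rightarrow> 'ti) \<Rightarrow> ('t \<Rightarrow> 'to)
     \<Rightarrow> ('si \<Rightarrow> 'ti \<Rightarrow> bool) \<Rightarrow> ('so \<Rightarrow> 'to \<Rightarrow> bool) \<Rightarrow> 's \<Rightarrow> 't \<Rightarrow> bool" where
  "pair_rel inS outS inT outT ri ro s t \<longleftrightarrow> ri (inS s) (inT t) \<and> ro (outS s) (outT t)"

definition total_surj_map :: "'a set \<Rightarrow> 'b set \<Rightarrow> ('a \<Rightarrow> 'b \<Rightarrow> bool) \<Rightarrow> bool" where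
  "total_surj_map A B r \<longleftrightarrow>
     (\<forall>a\<in>A. \<exists>!b. b \<in> B \<and> r a b) \<and> (\<forall>b\<in>B. \<exists>a\<in>A. r a b)"

definition tau_img :: "'b set \<Rightarrow> ('a \<Rightarrow> 'b \<Rightarrow> bool) \<Rightarrow> 'a set \<Rightarrow> 'b set" where
  "tau_img B r \<pi> = {b \<in> B. \<exists>a\<in>\<pi>. r a b}"

definition sigma_img :: "'a set \<Rightarrow> 'b set \<Rightarrow> ('a \<Rightarrow> 'b \<Rightarrow> bool) \<Rightarrow> 'b set \<Rightarrow> 'a set" where
  "sigma_img A B r \<pi> = {a \<in> A. \<forall>b\<in>B. r a b \<longrightarrow> b \<in> \<pi>}"

definition uco_on :: "'a set \<Rightarrow> ('a set \<Rightarrow> 'a set) \<Rightarrow> bool" where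
  "uco_on A f \<longleftrightarrow>
     (\<forall>X. X \<subseteq> A \<longrightarrow> f X \<subseteq> A) \<and>
     (\<forall>X Y. X \<subseteq> A \<longrightarrow> Y \<subseteq> A \<longrightarrow> X \<subseteq> Y \<longrightarrow> f X \<subseteq> f Y) \<and>
     (\<forall>X. X \<subseteq> A \<longrightarrow> f (f X) = f X) \<and>
     (\<forall>X. X \<subseteq> A \<longrightarrow> X \<subseteq> f X)"

definition ANI :: "('t \<Rightarrow> 'i) \<Rightarrow> ('t \<Rightarrow> 'o) \<Rightarrow> ('i set \<Rightarrow> 'i set) \<Rightarrow> ('o set \<Rightarrow> 'o set)
                   \<Rightarrow> 't set set" where
  "ANI inp out \<phi> \<rho> = {\<pi>. \<forall>t1\<in>\<pi>. \<forall>t2\<in>\<pi>.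
      \<phi> {inp t1} = \<phi> {inp t2} \<longrightarrow> \<rho> {out t1} = \<rho> {out t2}}"

end

theory Submission
  imports Defs
begin

text \<open>Since the output
  relation is a total surjective map, \<open>tau_img\<close> sends the output of a source trace to the
  singleton of the related target output, and \<open>sigma_img\<close> is injective on sets of target
  outputs. So for target traces whose inputs are \<open>\<phi>T\<close>-equivalent, the hypothesis on
  \<open>\<phi>T\<close> makes the inputs of the related source traces \<open>\<phi>S#\<close>-equivalent;
  source non-interference then equates the \<open>sigma_img\<close>-images of the two
  \<open>\<rho>T\<close>-closed target outputs, and injectivity equates the outputs themselves.\<close>

lemma CC_behE:
  assumes "CC semS semT cmp rel" and "t \<in> beh semT (cmp W)"
  obtains s where "s \<in> beh semS W" and "rel s t"
  using assms unfolding CC_def beh_def by blast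

lemma ANI_I:
  assumes "\<And>t1 t2. t1 \<in> \<pi> \<Longrightarrow> t2 \<in> \<pi> \<Longrightarrow> \<phi> {inp t1} = \<phi> {inp t2} \<Longrightarrow>
    \<rho> {out t1} = \<rho> {out t2}"
  shows "\<pi> \<in> ANI inp out \<phi> \<rho>"
  unfolding ANI_def by (intro CollectI ballI impI) (rule assms)

lemma ANI_D:
  assumes "\<pi> \<in> ANI inp out \<phi> \<rho>" and "t1 \<in> \<pi>" and "t2 \<in> \<pi>" and "\<phi> {inp t1} = \<phi> {inp t2}"
  shows "\<rho> {out t1} = \<rho> {out t2}"
proof -
  from assms(1) have "\<forall>t1\<in>\<pi>. \<forall>t2\<in>\<pi>. \<phi> {inp t1} = \<phi> {inp t2} \<longrightarrow> \<rho> {out t1} = \<rho> {out t2}"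
    unfolding ANI_def by (rule CollectD)
  with assms(2-4) show ?thesis by blast
qed

lemma uco_on_subset:
  assumes "uco_on A f" and "X \<subseteq> A"
  shows "f X \<subseteq> A"
proof -
  from assms(1) have "\<forall>X. X \<subseteq> A \<longrightarrow> f X \<subseteq> A"
    unfolding uco_on_def by (rule conjunct1)
  with assms(2) show ?thesis by blast
qed

lemma total_surj_map_unique:
  assumes "total_surj_map A B r" and "a \<in> A"
  shows "\<exists>!b. b \<in> B \<and> r a b"
  using assms unfolding total_surj_map_def by simp

lemma total_surj_map_surj:
  assumes "total_surj_map A B r" and "b \<in> B"
  obtains a where "a \<in> A" and "r a b"
  using assms unfolding total_surj_map_def by auto

lemma tau_img_singleton:
  assumes "\<exists>!b. b \<in> B \<and> r a b" and "b \<in> B" and "r a b"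
  shows "tau_img B r {a} = {b}"
  using assms unfolding tau_img_def by blast

lemma mem_sigma_img_iff:
  "a \<in> sigma_img A B r Z \<longleftrightarrow> a \<in> A \<and> tau_img B r {a} \<subseteq> Z"
  unfolding sigma_img_def tau_img_def by blast

lemma inj_on_sigma_img:
  assumes "total_surj_map A B r"
  shows "inj_on (sigma_img A B r) (Pow B)"
proof (rule inj_onI)
  fix X Y assume "X \<in> Pow B" "Y \<in> Pow B" and sigma_eq: "sigma_img A B r X = sigma_img A B r Y"
  have "b \<in> X \<longleftrightarrow> b \<in> Y" if "b \<in> B" for b
  proof -
    obtain a where "a \<in> A" "r a b"
      using total_surj_map_surj[OF assms \<open>b \<in> B\<close>] .
    then have "tau_img B r {a} = {b}"
      using total_surj_map_unique[OF assms] \<open>b \<in> B\<close> by (simp add: tau_img_singleton)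
    with \<open>a \<in> A\<close> have "b \<in> Z \<longleftrightarrow> a \<in> sigma_img A B r Z" for Z
      by (simp add: mem_sigma_img_iff)
    with sigma_eq show ?thesis by simp
  qed
  with \<open>X \<in> Pow B\<close> \<open>Y \<in> Pow B\<close> show "X = Y" by blast
qed

theorem theorem4p3:
  fixes semS :: "'w \<Rightarrow> 's \<Rightarrow> bool" and semT :: "'p \<Rightarrow> 't \<Rightarrow> bool"
    and cmp :: "'w \<Rightarrow> 'p"
    and inS :: "'s \<Rightarrow> 'si" and outS :: "'s \<Rightarrow> 'so"
    and inT :: "'t \<Rightarrow> 'ti" and outT :: "'t \<Rightarrow> 'to"
    and rin :: "'si \<Rightarrow> 'ti \<Rightarrow> bool" and rout :: "'so \<Rightarrow> 'to \<Rightarrow> bool"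
    and \<phi>T :: "'ti set \<Rightarrow> 'ti set" and \<rho>T :: "'to set \<Rightarrow> 'to set"
    and W :: 'w
  assumes rout_map: "total_surj_map (range outS) (range outT) rout"
    and uco_phi: "uco_on (range inT) \<phi>T"
    and uco_rho: "uco_on (range outT) \<rho>T"
    and phi_cond: "\<forall>s t. rin (inS s) (inT t) \<longrightarrow>
                      \<phi>T {inT t} = \<phi>T (tau_img (range inT) rin {inS s})"
    and cc: "CC semS semT cmp (pair_rel inS outS inT outT rin rout)"
    and src: "sat semS W (ANI inS outS
                 (sigma_img (range inS) (range inT) rin \<circ> \<phi>T \<circ> tau_img (range inT) rin)
                 (sigma_img (range outS) (range outT) rout \<circ> \<rho>T \<circ> tau_img (range outT) rout))"
  shows "sat semT (cmp W) (ANI inT outT \<phi>T \<rho>T)"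
  unfolding sat_def
proof (rule ANI_I)
  fix t1 t2 assume t1: "t1 \<in> beh semT (cmp W)" and t2: "t2 \<in> beh semT (cmp W)"
    and phi_eq: "\<phi>T {inT t1} = \<phi>T {inT t2}"
  obtain s1 where s1: "s1 \<in> beh semS W" "rin (inS s1) (inT t1)" "rout (outS s1) (outT t1)"
    using CC_behE[OF cc t1] unfolding pair_rel_def by blast
  obtain s2 where s2: "s2 \<in> beh semS W" "rin (inS s2) (inT t2)" "rout (outS s2) (outT t2)"
    using CC_behE[OF cc t2] unfolding pair_rel_def by blast
  have tau_out: "tau_img (range outT) rout {outS s} = {outT t}" if "rout (outS s) (outT t)" for s t
    using total_surj_map_unique[OF rout_map rangeI] rangeI that by (rule tau_img_singleton)
  have rho_range: "\<rho>T {outT t} \<in> Pow (range outT)" for t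
    using uco_on_subset[OF uco_rho] by simp
  have "\<phi>T (tau_img (range inT) rin {inS s1}) = \<phi>T (tau_img (range inT) rin {inS s2})"
    using phi_cond[rule_format, OF s1(2)] phi_cond[rule_format, OF s2(2)] phi_eq by simp
  then have "sigma_img (range outS) (range outT) rout (\<rho>T {outT t1})
      = sigma_img (range outS) (range outT) rout (\<rho>T {outT t2})"
    using ANI_D[OF src[unfolded sat_def] s1(1) s2(1)]
    by (simp add: tau_out[OF s1(3)] tau_out[OF s2(3)])
  then show "\<rho>T {outT t1} = \<rho>T {outT t2}"
    by (rule inj_onD[OF inj_on_sigma_img[OF rout_map] _ rho_range rho_range])
qed

end
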